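(* Let $M$ be a finite matroid, $k\ge0$, let $e_1,\dots,e_k$ be distinct elements of $M$ and $C_0,C_1,\dots,C_k$ subsets of $M$ such that $|C_i|\ge3$ for $i=0,\dots,k$, $C_{i-1}\cap C_i=\{e_i\}$ for $i=1,\dots,k$, and $C_i\cap C_j=\emptyset$ whenever $|i-j|\ge2$. Let $e_0\in C_0\setminus\{e_1\}$ and, for $i=1,\dots,k$, let $e_i'\in C_{i-1}\setminus\{e_{i-1},e_i\}$. Define $M_0=M$ and $M_i=M_{i-1}/(C_{i-1}\setminus\{e_i,e_i'\})$ for $i=1,\dots,k$. If $C_i$ is a circuit in $M_i$ for every $i=0,1,\dots,k$, then $M$ contains a circuit of length at least $k+3$ that contains $e_0$.
   Context: For a finite matroid $M$ with rank function $r_M$ and $F\subseteq M$, the contraction $M/F$ has ground set $M\setminus F$, and $F'\subseteq M\setminus F$ is independent in $M/F$ iff $F'$ is independent in $M$ and $r_M(F\cup F')=r_M(F)+r_M(F')$. A circuit is a minimal dependent set; its length is its number of elements. *)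

theory Defs
  imports Main
begin

type_synonym 'a matroid = "'a set \<times> ('a set \<Rightarrow> bool)"

definition ground :: "'a matroid \<Rightarrow> 'a set" where "ground M = fst M"
definition indep :: "'a matroid \<Rightarrow> 'a set \<Rightarrow> bool" where "indep M = snd M"

definition matroid :: "'a matroid \<Rightarrow> bool" where
  "matroid M \<longleftrightarrow> finite (ground M) \<and> indep M {}
     \<and> (\<forall>X. indep M X \<longrightarrow> X \<subseteq> ground M)
     \<and> (\<forall>X Y. indep M X \<and> Y \<subseteq> X \<longrightarrow> indep M Y)
     \<and> (\<forall>X Y. indep M X \<and> indep M Y \<and> card X < card Y \<longrightarrow>
              (\<exists>y\<in>Y - X. indep M (insert y X)))"

definition rank :: "'a matroid \<Rightarrow> 'a set \<Rightarrow> nat" where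
  "rank M X = Max (card ` {Y. Y \<subseteq> X \<and> indep M Y})"

definition contract :: "'a matroid \<Rightarrow> 'a set \<Rightarrow> 'a matroid" where
  "contract M F = (ground M - F,
     \<lambda>F'. F' \<subseteq> ground M - F \<and> indep M F' \<and> rank M (F \<union> F') = rank M F + rank M F')"

definition circuit :: "'a matroid \<Rightarrow> 'a set \<Rightarrow> bool" where
  "circuit M C \<longleftrightarrow> C \<subseteq> ground M \<and> \<not> indep M C \<and> (\<forall>D. D \<subset> C \<longrightarrow> indep M D)"

fun contr_seq :: "'a matroid \<Rightarrow> (nat \<Rightarrow> 'a set) \<Rightarrow> nat \<Rightarrow> 'a matroid" where
  "contr_seq M F 0 = M"
| "contr_seq M F (Suc i) = contract (contr_seq M F i) (F i)"

end

theory Submission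
  imports Defs
begin

text \<open>Contracting \<open>C\<^sub>0 - {e\<^sub>1, e\<^sub>1'}\<close> turns the remaining
  data into a chain of length \<open>k - 1\<close> in \<open>M\<^sub>1\<close>, so \<open>M\<^sub>1\<close> has a circuit \<open>D\<close> through
  \<open>e\<^sub>1\<close> with at least \<open>k + 2\<close> elements. With \<open>H = C\<^sub>0 - {e\<^sub>0, e\<^sub>1, e\<^sub>1'}\<close>, the set
  \<open>{e\<^sub>0, e\<^sub>1, e\<^sub>1'}\<close> is a triangle of \<open>M/H\<close> and \<open>D\<close> is a circuit of \<open>(M/H)/e\<^sub>0\<close>,
  in which \<open>e\<^sub>1\<close> and \<open>e\<^sub>1'\<close> are parallel. Submodularity shows that \<open>D\<close> or
  \<open>D - e\<^sub>1 + e\<^sub>1'\<close> is independent in \<open>M/H\<close>; adding \<open>e\<^sub>0\<close> to it gives a circuit of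
  \<open>M/H\<close>, and every circuit of \<open>M/H\<close> (\<open>H\<close> independent) extends to a circuit of \<open>M\<close>.

  The argument is carried out for rank functions, where contraction by \<open>H\<close> is
  simply \<open>Y \<mapsto> r (H \<union> Y)\<close>.\<close>

section \<open>Rank functions\<close>

text \<open>\<open>\<rho> {}\<close> may be positive, so that the contraction \<open>contract_rank \<rho> H\<close> is again a
  rank function; independence is measured relative to \<open>\<rho> {}\<close>.\<close>

definition rank_function :: "('a set \<Rightarrow> nat) \<Rightarrow> bool" where
  "rank_function \<rho> \<longleftrightarrow> (\<forall>X Y. X \<subseteq> Y \<longrightarrow> \<rho> X \<le> \<rho> Y) \<and> (\<forall>X y. \<rho> (insert y X) \<le> \<rho> X + 1)
     \<and> (\<forall>X Y. \<rho> (X \<union> Y) + \<rho> (X \<inter> Y) \<le> \<rho> X + \<rho> Y)"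

definition rank_indep :: "('a set \<Rightarrow> nat) \<Rightarrow> 'a set \<Rightarrow> bool" where
  "rank_indep \<rho> X \<longleftrightarrow> \<rho> X = \<rho> {} + card X"

definition contract_rank :: "('a set \<Rightarrow> nat) \<Rightarrow> 'a set \<Rightarrow> 'a set \<Rightarrow> nat" where
  "contract_rank \<rho> H Y = \<rho> (H \<union> Y)"

lemma rank_function_mono: "rank_function \<rho> \<Longrightarrow> X \<subseteq> Y \<Longrightarrow> \<rho> X \<le> \<rho> Y"
  unfolding rank_function_def by blast

lemma rank_function_insert: "rank_function \<rho> \<Longrightarrow> \<rho> (insert y X) \<le> \<rho> X + 1"
  unfolding rank_function_def by blast

lemma rank_function_submodular: "rank_function \<rho> \<Longrightarrow> \<rho> (X \<union> Y) + \<rho> (X \<inter> Y) \<le> \<rho> X + \<rho> Y"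
  unfolding rank_function_def by blast

lemma rank_function_contract_rank:
  assumes "rank_function \<rho>" shows "rank_function (contract_rank \<rho> H)"
proof -
  have "\<rho> (H \<union> (X \<union> Y)) + \<rho> (H \<union> (X \<inter> Y)) \<le> \<rho> (H \<union> X) + \<rho> (H \<union> Y)" for X Y
    using rank_function_submodular[OF assms, of "H \<union> X" "H \<union> Y"] by (simp add: Un_Int_distrib Un_left_commute Un_assoc)
  then show ?thesis
    using rank_function_mono[OF assms] rank_function_insert[OF assms]
    unfolding rank_function_def contract_rank_def by (simp add: sup.coboundedI2 sup_mono)
qed

lemma contract_rank_contract_rank [simp]:
  "contract_rank (contract_rank \<rho> G) H = contract_rank \<rho> (G \<union> H)"
  by (simp add: contract_rank_def fun_eq_iff Un_assoc)

lemma contract_rank_empty [simp]: "contract_rank \<rho> {} = \<rho>"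
  by (simp add: contract_rank_def fun_eq_iff)

lemma rank_indep_contract_rank_iff:
  "rank_indep (contract_rank \<rho> H) X \<longleftrightarrow> \<rho> (H \<union> X) = \<rho> H + card X"
  by (simp add: rank_indep_def contract_rank_def)

lemma rank_function_Un_le_card:
  assumes "rank_function \<rho>" and "finite Y" shows "\<rho> (X \<union> Y) \<le> \<rho> X + card Y"
  using \<open>finite Y\<close>
proof (induction Y rule: finite_induct)
  case (insert y Y)
  then show ?case using rank_function_insert[OF assms(1), of y "X \<union> Y"] by simp
qed simp

lemma rank_function_le_card: "rank_function \<rho> \<Longrightarrow> finite Y \<Longrightarrow> \<rho> Y \<le> \<rho> {} + card Y"
  using rank_function_Un_le_card[of \<rho> Y "{}"] by simp

lemma rank_indep_subset:
  assumes \<rho>: "rank_function \<rho>" and "finite Y" "rank_indep \<rho> Y" "X \<subseteq> Y"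
  shows "rank_indep \<rho> X"
proof -
  have "finite X" using assms finite_subset by blast
  have "\<rho> Y \<le> \<rho> X + card (Y - X)"
    using rank_function_Un_le_card[OF \<rho>, of "Y - X" X] assms by (simp add: Un_absorb1)
  moreover have "card (Y - X) = card Y - card X" "card X \<le> card Y"
    using assms by (auto simp: card_Diff_subset \<open>finite X\<close> card_mono)
  moreover have "\<rho> X \<le> \<rho> {} + card X" using rank_function_le_card[OF \<rho> \<open>finite X\<close>] .
  ultimately show ?thesis using assms(3) unfolding rank_indep_def by linarith
qed

lemma rank_function_closure:
  assumes \<rho>: "rank_function \<rho>" and "\<rho> (S \<union> T) \<le> \<rho> S"
  shows "\<rho> (S \<union> T \<union> Y) \<le> \<rho> (S \<union> Y)"
proof -
  have "\<rho> (S \<union> T \<union> Y) + \<rho> ((S \<union> Y) \<inter> (S \<union> T)) \<le> \<rho> (S \<union> Y) + \<rho> (S \<union> T)"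
    using rank_function_submodular[OF \<rho>, of "S \<union> Y" "S \<union> T"] by (simp add: Un_ac)
  moreover have "\<rho> S \<le> \<rho> ((S \<union> Y) \<inter> (S \<union> T))" by (rule rank_function_mono[OF \<rho>]) blast
  ultimately show ?thesis using assms(2) by linarith
qed

section \<open>Circuits of rank functions\<close>

definition rank_circuit :: "('a set \<Rightarrow> nat) \<Rightarrow> 'a set \<Rightarrow> 'a set \<Rightarrow> bool" where
  "rank_circuit \<rho> E Z \<longleftrightarrow> finite Z \<and> Z \<subseteq> E \<and> \<not> rank_indep \<rho> Z \<and> (\<forall>D. D \<subset> Z \<longrightarrow> rank_indep \<rho> D)"

lemma rank_circuitI:
  assumes \<rho>: "rank_function \<rho>" and "finite Z" "Z \<subseteq> E" "\<not> rank_indep \<rho> Z"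
    and delete: "\<And>y. y \<in> Z \<Longrightarrow> rank_indep \<rho> (Z - {y})"
  shows "rank_circuit \<rho> E Z"
  unfolding rank_circuit_def
proof (intro conjI allI impI)
  fix D assume "D \<subset> Z"
  then obtain y where "y \<in> Z" "D \<subseteq> Z - {y}" by blast
  then show "rank_indep \<rho> D" using rank_indep_subset[OF \<rho> _ delete] \<open>finite Z\<close> by blast
qed (use assms in auto)

lemma rank_circuit_rank_delete:
  assumes \<rho>: "rank_function \<rho>" and Z: "rank_circuit \<rho> E Z" and "y \<in> Z"
  shows "\<rho> Z = \<rho> (Z - {y})"
proof -
  have "finite Z" "\<not> rank_indep \<rho> Z" "rank_indep \<rho> (Z - {y})"
    using Z \<open>y \<in> Z\<close> unfolding rank_circuit_def by auto
  moreover have "\<rho> Z \<le> \<rho> (Z - {y}) + 1"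
    using rank_function_insert[OF \<rho>, of y "Z - {y}"] \<open>y \<in> Z\<close> by (simp add: insert_absorb)
  moreover have "\<rho> (Z - {y}) \<le> \<rho> Z" by (rule rank_function_mono[OF \<rho>]) blast
  moreover have "card Z \<ge> 1" using \<open>finite Z\<close> \<open>y \<in> Z\<close> by (metis One_nat_def Suc_leI card_gt_0_iff empty_iff)
  ultimately show ?thesis using \<open>y \<in> Z\<close> unfolding rank_indep_def by simp
qed

lemma rank_circuit_Un_delete:
  assumes \<rho>: "rank_function \<rho>" and Z: "rank_circuit \<rho> E Z" and "y \<in> Z"
  shows "\<rho> (Z \<union> Y) \<le> \<rho> ((Z - {y}) \<union> Y)"
proof -
  have "Z = (Z - {y}) \<union> {y}" using \<open>y \<in> Z\<close> by blast
  moreover have "\<rho> ((Z - {y}) \<union> {y}) \<le> \<rho> (Z - {y})"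
    using rank_circuit_rank_delete[OF assms] calculation by simp
  ultimately show ?thesis using rank_function_closure[OF \<rho>] by metis
qed

lemma rank_circuit_contract:
  assumes \<rho>: "rank_function \<rho>" and C: "rank_circuit \<rho> E C" and "H \<subset> C"
  shows "rank_circuit (contract_rank \<rho> H) (E - H) (C - H)"
  unfolding rank_circuit_def rank_indep_contract_rank_iff
proof (intro conjI allI impI)
  have "finite C" "C \<subseteq> E" "\<not> rank_indep \<rho> C" and indep: "\<And>D. D \<subset> C \<Longrightarrow> rank_indep \<rho> D"
    using C unfolding rank_circuit_def by auto
  have "finite H" using \<open>H \<subset> C\<close> \<open>finite C\<close> finite_subset by blast
  have H: "\<rho> H = \<rho> {} + card H" using indep[OF \<open>H \<subset> C\<close>] unfolding rank_indep_def .
  show "finite (C - H)" "C - H \<subseteq> E - H" using \<open>finite C\<close> \<open>C \<subseteq> E\<close> by auto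
  have "card C = card H + card (C - H)"
    using \<open>H \<subset> C\<close> \<open>finite C\<close>
    by (metis card_Diff_subset card_mono finite_subset le_add_diff_inverse psubset_imp_subset)
  then show "\<rho> (H \<union> (C - H)) \<noteq> \<rho> H + card (C - H)"
    using \<open>\<not> rank_indep \<rho> C\<close> \<open>H \<subset> C\<close> H unfolding rank_indep_def by (simp add: Un_absorb1)
  fix D assume "D \<subset> C - H"
  then have "H \<union> D \<subset> C" "H \<inter> D = {}" using \<open>H \<subset> C\<close> by auto
  moreover have "finite D" using \<open>D \<subset> C - H\<close> \<open>finite C\<close> finite_subset by blast
  ultimately show "\<rho> (H \<union> D) = \<rho> H + card D"
    using indep H \<open>finite H\<close> unfolding rank_indep_def by (simp add: card_Un_disjoint)
qed

lemma rank_dependent_contains_circuit: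
  assumes \<rho>: "rank_function \<rho>" and "finite X" "X \<subseteq> E" "\<not> rank_indep \<rho> X"
  shows "\<exists>W\<subseteq>X. rank_circuit \<rho> E W"
proof -
  define dep where "dep W \<longleftrightarrow> W \<subseteq> X \<and> \<not> rank_indep \<rho> W" for W
  obtain W where "dep W" and min: "\<And>V. dep V \<Longrightarrow> card W \<le> card V"
    using ex_has_least_nat[of dep X card] assms unfolding dep_def by blast
  have "finite W" using \<open>dep W\<close> \<open>finite X\<close> finite_subset unfolding dep_def by blast
  have "rank_indep \<rho> V" if "V \<subset> W" for V
    using min[of V] psubset_card_mono[OF \<open>finite W\<close> that] that \<open>dep W\<close> unfolding dep_def by auto
  then show ?thesis
    using \<open>dep W\<close> \<open>finite W\<close> \<open>X \<subseteq> E\<close> unfolding dep_def rank_circuit_def by blast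
qed

lemma rank_circuit_lift:
  assumes \<rho>: "rank_function \<rho>" and Z: "rank_circuit (contract_rank \<rho> H) (E - H) Z"
    and "finite H" "H \<subseteq> E" "rank_indep \<rho> H"
  shows "\<exists>W. rank_circuit \<rho> E W \<and> Z \<subseteq> W \<and> W \<subseteq> Z \<union> H"
proof -
  have "finite Z" "Z \<subseteq> E - H" and Z_dep: "\<not> rank_indep (contract_rank \<rho> H) Z"
    and Z_indep: "\<And>y. y \<in> Z \<Longrightarrow> rank_indep (contract_rank \<rho> H) (Z - {y})"
    using Z unfolding rank_circuit_def by auto
  have indep_Un: "rank_indep \<rho> (H \<union> Y) \<longleftrightarrow> rank_indep (contract_rank \<rho> H) Y" if "Y \<subseteq> Z" for Y
  proof -
    have "card (H \<union> Y) = card H + card Y"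
      using that \<open>Z \<subseteq> E - H\<close> \<open>finite H\<close> \<open>finite Z\<close> by (subst card_Un_disjoint) (auto dest: finite_subset)
    then show ?thesis using \<open>rank_indep \<rho> H\<close> unfolding rank_indep_def contract_rank_def by (simp add: add.assoc)
  qed
  obtain W where "W \<subseteq> H \<union> Z" and W: "rank_circuit \<rho> E W"
    using rank_dependent_contains_circuit[OF \<rho>, of "H \<union> Z" E] indep_Un[of Z] Z_dep
      \<open>finite H\<close> \<open>finite Z\<close> \<open>H \<subseteq> E\<close> \<open>Z \<subseteq> E - H\<close> by blast
  have "Z \<subseteq> W"
  proof
    fix y assume "y \<in> Z"
    show "y \<in> W"
    proof (rule ccontr)
      assume "y \<notin> W"
      then have "W \<subseteq> H \<union> (Z - {y})" using \<open>W \<subseteq> H \<union> Z\<close> by blast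
      moreover have "rank_indep \<rho> (H \<union> (Z - {y}))" using indep_Un Z_indep[OF \<open>y \<in> Z\<close>] by blast
      ultimately have "rank_indep \<rho> W"
        using rank_indep_subset[OF \<rho>] \<open>finite H\<close> \<open>finite Z\<close> by blast
      then show False using W unfolding rank_circuit_def by blast
    qed
  qed
  then show ?thesis using W \<open>W \<subseteq> H \<union> Z\<close> by blast
qed

lemma rank_circuit_parallel_le:
  assumes \<rho>: "rank_function \<rho>" and "rank_circuit \<rho> E {e, f}"
  shows "\<rho> (insert f Y) \<le> \<rho> (insert e Y)"
proof -
  have "\<rho> (insert f Y) \<le> \<rho> ({e, f} \<union> Y)" by (rule rank_function_mono[OF \<rho>]) blast
  also have "\<dots> \<le> \<rho> (({e, f} - {f}) \<union> Y)" using rank_circuit_Un_delete[OF assms] by simp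
  also have "\<dots> \<le> \<rho> (insert e Y)" by (rule rank_function_mono[OF \<rho>]) blast
  finally show ?thesis .
qed

lemma rank_circuit_parallel_eq:
  assumes "rank_function \<rho>" and "rank_circuit \<rho> E {e, f}"
  shows "\<rho> (insert e Y) = \<rho> (insert f Y)"
  using rank_circuit_parallel_le[OF assms] rank_circuit_parallel_le[of \<rho> E f e] assms
  by (simp add: insert_commute le_antisym)

lemma rank_circuit_swap_parallel:
  assumes \<rho>: "rank_function \<rho>" and ef: "rank_circuit \<rho> E {e, f}"
    and D: "rank_circuit \<rho> E D" and "e \<in> D" "f \<notin> D"
  shows "rank_circuit \<rho> E (insert f (D - {e}))"
proof -
  have "finite D" "D \<subseteq> E" "f \<in> E" and D_indep: "\<And>V. V \<subset> D \<Longrightarrow> rank_indep \<rho> V"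
    using D ef unfolding rank_circuit_def by auto
  have swap: "rank_indep \<rho> (insert f (D - {e} - Y)) \<longleftrightarrow> rank_indep \<rho> (D - Y)"
    if "e \<notin> Y" for Y
  proof -
    have "insert e (D - {e} - Y) = D - Y" using \<open>e \<in> D\<close> that by blast
    moreover have "card (insert f (D - {e} - Y)) = card (insert e (D - {e} - Y))"
      using \<open>finite D\<close> \<open>f \<notin> D\<close> by simp
    ultimately show ?thesis
      using rank_circuit_parallel_eq[OF \<rho> ef, of "D - {e} - Y"] unfolding rank_indep_def by simp
  qed
  show ?thesis
  proof (rule rank_circuitI[OF \<rho>])
    show "finite (insert f (D - {e}))" "insert f (D - {e}) \<subseteq> E" using \<open>finite D\<close> \<open>D \<subseteq> E\<close> \<open>f \<in> E\<close> by auto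
    show "\<not> rank_indep \<rho> (insert f (D - {e}))" using swap[of "{}"] D unfolding rank_circuit_def by simp
    fix y assume y: "y \<in> insert f (D - {e})"
    show "rank_indep \<rho> (insert f (D - {e}) - {y})"
    proof (cases "y = f")
      case True
      then show ?thesis using D_indep[of "D - {e}"] \<open>e \<in> D\<close> \<open>f \<notin> D\<close> by auto
    next
      case False
      then have "insert f (D - {e}) - {y} = insert f (D - {e} - {y})" "e \<notin> {y}" "D - {y} \<subset> D"
        using y by auto
      then show ?thesis using swap[of "{y}"] D_indep[of "D - {y}"] by simp
    qed
  qed
qed

lemma rank_circuit_insert_contract:
  assumes \<rho>: "rank_function \<rho>" and D: "rank_circuit (contract_rank \<rho> {x}) (E - {x}) D"
    and "x \<in> E" "rank_indep \<rho> {x}" "rank_indep \<rho> D"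
  shows "rank_circuit \<rho> E (insert x D)"
proof -
  have "finite D" "D \<subseteq> E - {x}" and D_dep: "\<not> rank_indep (contract_rank \<rho> {x}) D"
    and D_indep: "\<And>V. V \<subset> D \<Longrightarrow> rank_indep (contract_rank \<rho> {x}) V"
    using D unfolding rank_circuit_def by auto
  have indep_insert: "rank_indep \<rho> (insert x V) \<longleftrightarrow> rank_indep (contract_rank \<rho> {x}) V"
    if "V \<subseteq> D" for V
  proof -
    have "x \<notin> V" "finite V" using that \<open>D \<subseteq> E - {x}\<close> \<open>finite D\<close> finite_subset by auto
    then show ?thesis using \<open>rank_indep \<rho> {x}\<close> unfolding rank_indep_def contract_rank_def by simp
  qed
  show ?thesis
  proof (rule rank_circuitI[OF \<rho>])
    show "finite (insert x D)" "insert x D \<subseteq> E" using \<open>finite D\<close> \<open>D \<subseteq> E - {x}\<close> \<open>x \<in> E\<close> by auto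
    show "\<not> rank_indep \<rho> (insert x D)" using indep_insert[of D] D_dep by simp
    fix y assume "y \<in> insert x D"
    then consider "y = x" | "y \<in> D" "insert x D - {y} = insert x (D - {y})"
      using \<open>D \<subseteq> E - {x}\<close> by blast
    then show "rank_indep \<rho> (insert x D - {y})"
    proof cases
      case 1
      then show ?thesis using \<open>rank_indep \<rho> D\<close> \<open>D \<subseteq> E - {x}\<close>
        by (metis Diff_iff Diff_insert_absorb insertI1 subsetD)
    next
      case 2
      then show ?thesis using indep_insert[of "D - {y}"] D_indep[of "D - {y}"] by auto
    qed
  qed
qed

section \<open>The triangle step\<close>

text \<open>If both \<open>D\<close> and \<open>D - e + f\<close> were dependent, submodularity applied to them would
  contradict \<open>x \<in> cl {e, f}\<close>.\<close>

lemma triangle_contract_circuit_indep: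
  assumes \<sigma>: "rank_function \<sigma>" and T: "rank_circuit \<sigma> E {x, e, f}" and "distinct [x, e, f]"
    and D: "rank_circuit (contract_rank \<sigma> {x}) (E - {x}) D" and "e \<in> D" "f \<notin> D"
  shows "rank_indep \<sigma> D \<or> rank_indep \<sigma> (insert f (D - {e}))"
proof (rule ccontr)
  assume dep: "\<not> ?thesis"
  define A where "A = D - {e}"
  define b where "b = \<sigma> {}"
  have "finite D" "D \<subseteq> E - {x}" and D_indep: "rank_indep (contract_rank \<sigma> {x}) A"
    using D \<open>e \<in> D\<close> unfolding rank_circuit_def A_def by auto
  have "finite A" "f \<notin> A" "D = insert e A" "card D = card A + 1"
    using \<open>finite D\<close> \<open>e \<in> D\<close> \<open>f \<notin> D\<close> card_Suc_Diff1[OF \<open>finite D\<close> \<open>e \<in> D\<close>] unfolding A_def by auto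
  have "\<sigma> D \<le> b + card A"
    using dep rank_function_le_card[OF \<sigma> \<open>finite D\<close>] \<open>card D = card A + 1\<close>
    unfolding rank_indep_def b_def by linarith
  moreover have "\<sigma> (insert f A) \<le> b + card A"
    using dep rank_function_le_card[OF \<sigma>, of "insert f A"] \<open>finite A\<close> \<open>f \<notin> A\<close>
    unfolding rank_indep_def b_def A_def by simp
  moreover have "\<sigma> ({e, f} \<union> A) + \<sigma> A \<le> \<sigma> D + \<sigma> (insert f A)"
  proof -
    have "D \<union> insert f A = {e, f} \<union> A" "D \<inter> insert f A = A"
      using \<open>D = insert e A\<close> \<open>f \<notin> D\<close> unfolding A_def by auto
    then show ?thesis using rank_function_submodular[OF \<sigma>, of D "insert f A"] by simp
  qed
  moreover have "\<sigma> (insert x A) = b + 1 + card A"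
  proof -
    have "rank_indep \<sigma> {x}" using T \<open>distinct [x, e, f]\<close> unfolding rank_circuit_def by auto
    then show ?thesis using D_indep unfolding rank_indep_def contract_rank_def b_def by simp
  qed
  moreover have "\<sigma> (insert x A) \<le> \<sigma> A + 1" by (rule rank_function_insert[OF \<sigma>])
  moreover have "\<sigma> (insert x A) \<le> \<sigma> ({e, f} \<union> A)"
  proof -
    have "\<sigma> (insert x A) \<le> \<sigma> ({x, e, f} \<union> A)" by (rule rank_function_mono[OF \<sigma>]) blast
    also have "\<dots> \<le> \<sigma> (({x, e, f} - {x}) \<union> A)" by (rule rank_circuit_Un_delete[OF \<sigma> T]) simp
    also have "{x, e, f} - {x} = {e, f}" using \<open>distinct [x, e, f]\<close> by auto
    finally show ?thesis .
  qed
  ultimately show False by linarith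
qed

lemma triangle_contract_circuit:
  assumes \<sigma>: "rank_function \<sigma>" and T: "rank_circuit \<sigma> E {x, e, f}" and "distinct [x, e, f]"
    and D: "rank_circuit (contract_rank \<sigma> {x}) (E - {x}) D" and "e \<in> D" "3 \<le> card D"
  shows "\<exists>Z. rank_circuit \<sigma> E Z \<and> x \<in> Z \<and> card Z = card D + 1"
proof -
  have "{x} \<subset> {x, e, f}" "{x, e, f} - {x} = {e, f}" using \<open>distinct [x, e, f]\<close> by auto
  then have ef: "rank_circuit (contract_rank \<sigma> {x}) (E - {x}) {e, f}"
    using rank_circuit_contract[OF \<sigma> T] by metis
  have "f \<notin> D"
  proof
    assume "f \<in> D"
    then have "{e, f} \<subset> D" using \<open>e \<in> D\<close> \<open>3 \<le> card D\<close> \<open>distinct [x, e, f]\<close> by auto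
    then show False using D ef unfolding rank_circuit_def by blast
  qed
  have D': "rank_circuit (contract_rank \<sigma> {x}) (E - {x}) (insert f (D - {e}))"
    by (rule rank_circuit_swap_parallel[OF rank_function_contract_rank[OF \<sigma>] ef D \<open>e \<in> D\<close> \<open>f \<notin> D\<close>])
  have "x \<in> E" "rank_indep \<sigma> {x}" using T \<open>distinct [x, e, f]\<close> unfolding rank_circuit_def by auto
  have "finite D" "x \<notin> D" using D unfolding rank_circuit_def by auto
  then have cards: "card (insert x D) = card D + 1" "card (insert x (insert f (D - {e}))) = card D + 1"
    using \<open>e \<in> D\<close> \<open>f \<notin> D\<close> \<open>distinct [x, e, f]\<close> card_Suc_Diff1[OF \<open>finite D\<close> \<open>e \<in> D\<close>] by auto
  from triangle_contract_circuit_indep[OF \<sigma> T \<open>distinct [x, e, f]\<close> D \<open>e \<in> D\<close> \<open>f \<notin> D\<close>]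
  show ?thesis
    using rank_circuit_insert_contract[OF \<sigma> D \<open>x \<in> E\<close> \<open>rank_indep \<sigma> {x}\<close>]
      rank_circuit_insert_contract[OF \<sigma> D' \<open>x \<in> E\<close> \<open>rank_indep \<sigma> {x}\<close>] cards by blast
qed

lemma rank_circuit_contract_extend:
  assumes \<rho>: "rank_function \<rho>" and C: "rank_circuit \<rho> E C"
    and "{x, e, f} \<subseteq> C" "distinct [x, e, f]"
    and D: "rank_circuit (contract_rank \<rho> (C - {e, f})) (E - (C - {e, f})) D"
    and "e \<in> D" "3 \<le> card D"
  shows "\<exists>W. rank_circuit \<rho> E W \<and> x \<in> W \<and> card D + 1 \<le> card W"
proof -
  define H where "H = C - {x, e, f}"
  have "H \<subset> C" "H \<subseteq> E" "finite H" "C - H = {x, e, f}" "H \<union> {x} = C - {e, f}"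
    using assms C finite_subset unfolding H_def rank_circuit_def by auto
  then have "rank_indep \<rho> H" using C unfolding rank_circuit_def by blast
  have T: "rank_circuit (contract_rank \<rho> H) (E - H) {x, e, f}"
    using rank_circuit_contract[OF \<rho> C \<open>H \<subset> C\<close>] \<open>C - H = {x, e, f}\<close> by simp
  have "E - H - {x} = E - (C - {e, f})" using \<open>H \<union> {x} = C - {e, f}\<close> by blast
  then have "rank_circuit (contract_rank (contract_rank \<rho> H) {x}) (E - H - {x}) D"
    using D \<open>H \<union> {x} = C - {e, f}\<close> by simp
  then obtain Z where Z: "rank_circuit (contract_rank \<rho> H) (E - H) Z" "x \<in> Z" "card Z = card D + 1"
    using triangle_contract_circuit[OF rank_function_contract_rank[OF \<rho>] T \<open>distinct [x, e, f]\<close>]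
      \<open>e \<in> D\<close> \<open>3 \<le> card D\<close> by blast
  obtain W where W: "rank_circuit \<rho> E W" "Z \<subseteq> W"
    using rank_circuit_lift[OF \<rho> Z(1) \<open>finite H\<close> \<open>H \<subseteq> E\<close> \<open>rank_indep \<rho> H\<close>] by blast
  then have "card Z \<le> card W" using card_mono unfolding rank_circuit_def by blast
  then show ?thesis using W Z by auto
qed

section \<open>Chains of circuits\<close>

definition circuit_chain :: "nat \<Rightarrow> (nat \<Rightarrow> 'a) \<Rightarrow> (nat \<Rightarrow> 'a) \<Rightarrow> (nat \<Rightarrow> 'a set) \<Rightarrow> bool" where
  "circuit_chain k e e' C \<longleftrightarrow>
     (\<forall>i\<le>k. card (C i) \<ge> 3)
   \<and> (\<forall>i\<in>{1..k}. C (i - 1) \<inter> C i = {e i})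
   \<and> (\<forall>i\<le>k. \<forall>j\<le>k. i + 2 \<le> j \<longrightarrow> C i \<inter> C j = {})
   \<and> e 0 \<in> C 0 \<and> (k \<ge> 1 \<longrightarrow> e 0 \<noteq> e 1)
   \<and> (\<forall>i\<in>{1..k}. e' i \<in> C (i - 1) - {e (i - 1), e i})"

lemma circuit_chain_head:
  assumes "circuit_chain (Suc k) e e' C"
  shows "{e 0, e 1, e' 1} \<subseteq> C 0" "distinct [e 0, e 1, e' 1]"
proof -
  have meet: "\<forall>i\<in>{1..Suc k}. C (i - 1) \<inter> C i = {e i}"
    and choice: "\<forall>i\<in>{1..Suc k}. e' i \<in> C (i - 1) - {e (i - 1), e i}"
    and "e 0 \<in> C 0" "e 0 \<noteq> e 1"
    using assms unfolding circuit_chain_def by auto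
  have "e 1 \<in> C 0" using bspec[OF meet, of 1] by auto
  moreover have "e' 1 \<in> C 0" "e' 1 \<noteq> e 0" "e' 1 \<noteq> e 1" using bspec[OF choice, of 1] by auto
  ultimately show "{e 0, e 1, e' 1} \<subseteq> C 0" "distinct [e 0, e 1, e' 1]"
    using \<open>e 0 \<in> C 0\<close> \<open>e 0 \<noteq> e 1\<close> by auto
qed

lemma circuit_chain_tail:
  assumes "circuit_chain (Suc k) e e' C"
  shows "circuit_chain k (\<lambda>i. e (Suc i)) (\<lambda>i. e' (Suc i)) (\<lambda>i. C (Suc i))"
proof -
  have meet: "\<forall>i\<in>{1..Suc k}. C (i - 1) \<inter> C i = {e i}"
    and disj: "\<forall>i\<le>Suc k. \<forall>j\<le>Suc k. i + 2 \<le> j \<longrightarrow> C i \<inter> C j = {}"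
    and choice: "\<forall>i\<in>{1..Suc k}. e' i \<in> C (i - 1) - {e (i - 1), e i}"
    using assms unfolding circuit_chain_def by blast+
  show ?thesis
    unfolding circuit_chain_def
  proof (intro conjI ballI impI)
    show "\<forall>i\<le>k. card (C (Suc i)) \<ge> 3" using assms unfolding circuit_chain_def by simp
    show "\<forall>i\<le>k. \<forall>j\<le>k. i + 2 \<le> j \<longrightarrow> C (Suc i) \<inter> C (Suc j) = {}" using disj by simp
    show "e (Suc 0) \<in> C (Suc 0)" using meet[rule_format, of 1] by auto
    fix i assume "i \<in> {1..k}"
    then have "Suc i \<in> {1..Suc k}" "Suc (i - 1) = i" by auto
    then show "C (Suc (i - 1)) \<inter> C (Suc i) = {e (Suc i)}"
      and "e' (Suc i) \<in> C (Suc (i - 1)) - {e (Suc (i - 1)), e (Suc i)}"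
      using meet[rule_format, of "Suc i"] choice[rule_format, of "Suc i"] by simp_all
  next
    assume "k \<ge> 1"
    then have "e 1 \<in> C 0" "e 2 \<in> C 2" "C 0 \<inter> C 2 = {}"
      using meet[rule_format, of 1] meet[rule_format, of 2] disj[rule_format, of 0 2] by auto
    then show "e (Suc 0) \<noteq> e (Suc 1)" by (auto simp: numeral_2_eq_2)
  qed
qed

lemma circuit_chain_long_circuit:
  assumes "rank_function \<rho>" "circuit_chain k e e' C"
    and "\<forall>i\<le>k. rank_circuit (contract_rank \<rho> (\<Union>j<i. C j - {e (Suc j), e' (Suc j)}))
                 (E - (\<Union>j<i. C j - {e (Suc j), e' (Suc j)})) (C i)"
  shows "\<exists>D. rank_circuit \<rho> E D \<and> card D \<ge> k + 3 \<and> e 0 \<in> D"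
  using assms
proof (induction k arbitrary: \<rho> E e e' C)
  case 0
  have "rank_circuit \<rho> E (C 0)" using "0.prems"(3)[rule_format, of 0] by simp
  moreover have "3 \<le> card (C 0)" "e 0 \<in> C 0" using "0.prems"(2) unfolding circuit_chain_def by simp_all
  ultimately show ?case by (intro exI[of _ "C 0"]) simp
next
  case (Suc k)
  define F where "F = C 0 - {e 1, e' 1}"
  let ?G = "\<lambda>i. \<Union>j<i. C (Suc j) - {e (Suc (Suc j)), e' (Suc (Suc j))}"
  have shifted: "\<forall>i\<le>k. rank_circuit (contract_rank (contract_rank \<rho> F) (?G i)) (E - F - ?G i) (C (Suc i))"
  proof (intro allI impI)
    fix i assume "i \<le> k"
    then have "rank_circuit (contract_rank \<rho> (\<Union>j<Suc i. C j - {e (Suc j), e' (Suc j)}))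
        (E - (\<Union>j<Suc i. C j - {e (Suc j), e' (Suc j)})) (C (Suc i))"
      using Suc.prems(3)[rule_format, of "Suc i"] by simp
    moreover have "(\<Union>j<Suc i. C j - {e (Suc j), e' (Suc j)}) = F \<union> ?G i"
      unfolding F_def lessThan_Suc_eq_insert_0 by simp
    moreover have "E - F - ?G i = E - (F \<union> ?G i)" by blast
    ultimately show "rank_circuit (contract_rank (contract_rank \<rho> F) (?G i)) (E - F - ?G i) (C (Suc i))"
      by (simp only: contract_rank_contract_rank)
  qed
  obtain D where D: "rank_circuit (contract_rank \<rho> F) (E - F) D" "card D \<ge> k + 3" "e 1 \<in> D"
    using Suc.IH[OF rank_function_contract_rank[OF Suc.prems(1)] circuit_chain_tail[OF Suc.prems(2)] shifted]
    by auto
  have "rank_circuit \<rho> E (C 0)" using Suc.prems(3)[rule_format, of 0] by simp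
  moreover have "3 \<le> card D" using D(2) by simp
  ultimately have "\<exists>W. rank_circuit \<rho> E W \<and> e 0 \<in> W \<and> card D + 1 \<le> card W"
    using rank_circuit_contract_extend[OF Suc.prems(1) _ circuit_chain_head[OF Suc.prems(2)] D(1)[unfolded F_def] D(3)]
    by blast
  then obtain W where "rank_circuit \<rho> E W" "e 0 \<in> W" "card D + 1 \<le> card W" by blast
  then show ?case using D(2) by (intro exI[of _ W]) simp
qed

section \<open>Matroids\<close>

lemma matroid_finite_ground: "matroid M \<Longrightarrow> finite (ground M)"
  unfolding matroid_def by blast

lemma matroid_indep_empty: "matroid M \<Longrightarrow> indep M {}"
  unfolding matroid_def by blast

lemma matroid_indep_subset_ground: "matroid M \<Longrightarrow> indep M X \<Longrightarrow> X \<subseteq> ground M"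
  unfolding matroid_def by blast

lemma matroid_indep_subset: "matroid M \<Longrightarrow> indep M X \<Longrightarrow> Y \<subseteq> X \<Longrightarrow> indep M Y"
  unfolding matroid_def by blast

lemma matroid_indep_augment:
  assumes "matroid M" "indep M X" "indep M Y" "card X < card Y"
  shows "\<exists>y\<in>Y - X. indep M (insert y X)"
proof -
  have "\<forall>X Y. indep M X \<and> indep M Y \<and> card X < card Y \<longrightarrow> (\<exists>y\<in>Y - X. indep M (insert y X))"
    using assms(1) unfolding matroid_def by (elim conjE)
  then show ?thesis using assms(2-4) by blast
qed

lemma matroid_indep_finite: "matroid M \<Longrightarrow> indep M X \<Longrightarrow> finite X"
  by (metis finite_subset matroid_indep_subset_ground matroid_finite_ground)

lemma finite_card_indep_subsets:
  assumes "matroid M" shows "finite (card ` {Y. Y \<subseteq> X \<and> indep M Y})"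
proof -
  have "{Y. Y \<subseteq> X \<and> indep M Y} \<subseteq> Pow (ground M)" using matroid_indep_subset_ground[OF assms] by blast
  then have "finite {Y. Y \<subseteq> X \<and> indep M Y}" using matroid_finite_ground[OF assms] finite_subset by blast
  then show ?thesis by simp
qed

lemma rank_ge_card_indep:
  assumes "matroid M" "Y \<subseteq> X" "indep M Y" shows "card Y \<le> rank M X"
  unfolding rank_def by (rule Max_ge) (use finite_card_indep_subsets[OF assms(1)] assms in auto)

lemma rank_attained: assumes "matroid M" shows "\<exists>Y. Y \<subseteq> X \<and> indep M Y \<and> card Y = rank M X"
proof -
  have "{} \<in> {Y. Y \<subseteq> X \<and> indep M Y}" using matroid_indep_empty[OF assms] by simp
  then have "card ` {Y. Y \<subseteq> X \<and> indep M Y} \<noteq> {}" by blast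
  then have "rank M X \<in> card ` {Y. Y \<subseteq> X \<and> indep M Y}"
    unfolding rank_def using Max_in finite_card_indep_subsets[OF assms] by blast
  then show ?thesis by auto
qed

lemma rank_extend_indep:
  assumes M: "matroid M"
  shows "indep M I \<Longrightarrow> I \<subseteq> X \<Longrightarrow> \<exists>B. I \<subseteq> B \<and> B \<subseteq> X \<and> indep M B \<and> card B = rank M X"
proof (induction "rank M X - card I" arbitrary: I rule: less_induct)
  case less
  obtain J where J: "J \<subseteq> X" "indep M J" "card J = rank M X" using rank_attained[OF M] by blast
  have le: "card I \<le> rank M X" using rank_ge_card_indep[OF M less.prems(2,1)] .
  show ?case
  proof (cases "card I = rank M X")
    case True
    then show ?thesis using less.prems by blast
  next
    case False
    then have "card I < card J" using le J(3) by simp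
    then obtain y where y: "y \<in> J - I" "indep M (insert y I)"
      using matroid_indep_augment[OF M less.prems(1) J(2)] by blast
    have "card (insert y I) = card I + 1" using y matroid_indep_finite[OF M less.prems(1)] by simp
    then have "rank M X - card (insert y I) < rank M X - card I" using False le by simp
    moreover have "insert y I \<subseteq> X" using y J(1) less.prems(2) by blast
    ultimately obtain B where "insert y I \<subseteq> B" "B \<subseteq> X" "indep M B" "card B = rank M X"
      using less.hyps[OF _ y(2)] by meson
    then show ?thesis by blast
  qed
qed

lemma rank_mono: assumes M: "matroid M" and "X \<subseteq> Y" shows "rank M X \<le> rank M Y"
proof -
  obtain J where "J \<subseteq> X" "indep M J" "card J = rank M X" using rank_attained[OF M] by blast
  then show ?thesis using rank_ge_card_indep[OF M, of J Y] \<open>X \<subseteq> Y\<close> by auto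
qed

lemma rank_insert_le: assumes M: "matroid M" shows "rank M (insert y X) \<le> rank M X + 1"
proof -
  obtain J where J: "J \<subseteq> insert y X" "indep M J" "card J = rank M (insert y X)"
    using rank_attained[OF M] by blast
  have "J - {y} \<subseteq> X" "indep M (J - {y})" using J matroid_indep_subset[OF M J(2)] by auto
  then have "card (J - {y}) \<le> rank M X" by (rule rank_ge_card_indep[OF M])
  then show ?thesis using J(3) matroid_indep_finite[OF M J(2)] card_Diff_singleton_if[of J y]
    by (simp split: if_splits)
qed

text \<open>Extend a basis of \<open>X \<inter> Y\<close> to a basis \<open>B\<close> of \<open>X \<union> Y\<close> and count \<open>B \<inter> X\<close>, \<open>B \<inter> Y\<close>.\<close>
lemma rank_submodular:
  assumes M: "matroid M" shows "rank M (X \<union> Y) + rank M (X \<inter> Y) \<le> rank M X + rank M Y"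
proof -
  obtain B0 where B0: "B0 \<subseteq> X \<inter> Y" "indep M B0" "card B0 = rank M (X \<inter> Y)"
    using rank_attained[OF M] by blast
  obtain B where B: "B0 \<subseteq> B" "B \<subseteq> X \<union> Y" "indep M B" "card B = rank M (X \<union> Y)"
    using rank_extend_indep[OF M B0(2), of "X \<union> Y"] B0(1) by blast
  have "finite B" using matroid_indep_finite[OF M B(3)] .
  have "card (B \<inter> X) \<le> rank M X" "card (B \<inter> Y) \<le> rank M Y"
    by (rule rank_ge_card_indep[OF M], blast, rule matroid_indep_subset[OF M B(3)], blast)+
  moreover have "(B \<inter> X) \<union> (B \<inter> Y) = B" "(B \<inter> X) \<inter> (B \<inter> Y) = B \<inter> X \<inter> Y" using B(2) by auto
  then have "card (B \<inter> X) + card (B \<inter> Y) = card B + card (B \<inter> X \<inter> Y)"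
    using card_Un_Int[of "B \<inter> X" "B \<inter> Y"] \<open>finite B\<close> by simp
  moreover have "card B0 \<le> card (B \<inter> X \<inter> Y)" using B0(1) B(1) \<open>finite B\<close> by (intro card_mono) auto
  ultimately show ?thesis using B(4) B0(3) by linarith
qed

lemma rank_function_rank: "matroid M \<Longrightarrow> rank_function (rank M)"
  unfolding rank_function_def by (intro conjI allI impI rank_mono rank_insert_le rank_submodular)

lemma rank_indep: assumes M: "matroid M" and "indep M Y" shows "rank M Y = card Y"
proof -
  obtain J where J: "J \<subseteq> Y" "card J = rank M Y" using rank_attained[OF M] by blast
  have "card J \<le> card Y" using card_mono[OF matroid_indep_finite[OF assms] J(1)] .
  then show ?thesis using rank_ge_card_indep[OF M order_refl assms(2)] J(2) by simp
qed

lemma rank_empty: "matroid M \<Longrightarrow> rank M {} = 0"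
  using rank_indep[OF _ matroid_indep_empty] by simp

lemma indep_iff_rank: assumes M: "matroid M" shows "indep M Y \<longleftrightarrow> Y \<subseteq> ground M \<and> rank M Y = card Y"
proof
  assume Y: "Y \<subseteq> ground M \<and> rank M Y = card Y"
  obtain J where J: "J \<subseteq> Y" "indep M J" "card J = rank M Y" using rank_attained[OF M] by blast
  have "finite Y" using Y matroid_finite_ground[OF M] finite_subset by blast
  then have "J = Y" using card_subset_eq[OF _ J(1)] J(3) Y by simp
  then show "indep M Y" using J(2) by simp
qed (simp add: matroid_indep_subset_ground[OF M] rank_indep[OF M])

definition contract_indep :: "'a matroid \<Rightarrow> 'a set \<Rightarrow> 'a set \<Rightarrow> bool" where
  "contract_indep M G I \<longleftrightarrow> I \<subseteq> ground M - G \<and> rank M (G \<union> I) = rank M G + card I"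

lemma rank_contract_indep:
  assumes M: "matroid M"
  shows "rank (ground M - G, contract_indep M G) X = rank M (G \<union> X) - rank M G"
proof -
  let ?S = "card ` {Y. Y \<subseteq> X \<and> contract_indep M G Y}"
  have "{Y. Y \<subseteq> X \<and> contract_indep M G Y} \<subseteq> Pow (ground M)" unfolding contract_indep_def by blast
  then have "finite {Y. Y \<subseteq> X \<and> contract_indep M G Y}" using matroid_finite_ground[OF M] finite_subset by blast
  then have "finite ?S" by simp
  moreover have "s \<le> rank M (G \<union> X) - rank M G" if "s \<in> ?S" for s
  proof -
    obtain Y where Y: "Y \<subseteq> X" "contract_indep M G Y" "s = card Y" using \<open>s \<in> ?S\<close> by blast
    have "rank M (G \<union> Y) \<le> rank M (G \<union> X)" by (rule rank_mono[OF M]) (use Y(1) in blast)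
    then show ?thesis using Y(2,3) unfolding contract_indep_def by simp
  qed
  moreover have "rank M (G \<union> X) - rank M G \<in> ?S"
  proof -
    obtain BG where BG: "BG \<subseteq> G" "indep M BG" "card BG = rank M G" using rank_attained[OF M] by blast
    obtain B where B: "BG \<subseteq> B" "B \<subseteq> G \<union> X" "indep M B" "card B = rank M (G \<union> X)"
      using rank_extend_indep[OF M BG(2), of "G \<union> X"] BG(1) by blast
    define Y where "Y = B - G"
    have "finite B" "finite Y" using matroid_indep_finite[OF M B(3)] unfolding Y_def by simp_all
    have "card (B \<inter> G) \<le> rank M G"
      by (rule rank_ge_card_indep[OF M], blast, rule matroid_indep_subset[OF M B(3)], blast)
    moreover have "card BG \<le> card (B \<inter> G)" using BG(1) B(1) \<open>finite B\<close> by (intro card_mono) auto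
    ultimately have "card (B \<inter> G) = rank M G" using BG(3) by simp
    moreover have "card B = card Y + card (B \<inter> G)"
    proof -
      have "B = Y \<union> (B \<inter> G)" "Y \<inter> (B \<inter> G) = {}" unfolding Y_def by blast+
      then show ?thesis using card_Un_disjoint[of Y "B \<inter> G"] \<open>finite B\<close> \<open>finite Y\<close> by simp
    qed
    moreover have "rank M (G \<union> Y) \<le> rank M G + card Y"
      by (rule rank_function_Un_le_card[OF rank_function_rank[OF M] \<open>finite Y\<close>])
    moreover have "card B \<le> rank M (G \<union> Y)"
      by (rule rank_ge_card_indep[OF M _ B(3)]) (auto simp: Y_def)
    moreover have "Y \<subseteq> X" "Y \<subseteq> ground M - G"
      using B(2) matroid_indep_subset_ground[OF M B(3)] unfolding Y_def by blast+
    ultimately have "contract_indep M G Y" "card Y = rank M (G \<union> X) - rank M G"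
      unfolding contract_indep_def using B(4) by simp_all
    then show ?thesis using \<open>Y \<subseteq> X\<close> by (intro image_eqI[of _ card Y]) auto
  qed
  ultimately have "Max ?S = rank M (G \<union> X) - rank M G" by (intro Max_eqI)
  then show ?thesis unfolding rank_def indep_def by simp
qed

lemma contract_contract_indep:
  assumes M: "matroid M"
  shows "contract (ground M - G, contract_indep M G) F = (ground M - (G \<union> F), contract_indep M (G \<union> F))"
proof -
  have "F' \<subseteq> ground M - G - F \<and> contract_indep M G F'
        \<and> rank M (G \<union> (F \<union> F')) - rank M G = (rank M (G \<union> F) - rank M G) + (rank M (G \<union> F') - rank M G)
      \<longleftrightarrow> contract_indep M (G \<union> F) F'" for F'
  proof -
    have mono: "rank M G \<le> rank M (G \<union> F)" "rank M G \<le> rank M (G \<union> F')"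
        "rank M G \<le> rank M (G \<union> (F \<union> F'))"
      by (rule rank_mono[OF M], blast)+
    have "rank M (G \<union> F') = rank M G + card F'"
      if "F' \<subseteq> ground M - (G \<union> F)" "rank M (G \<union> F \<union> F') = rank M (G \<union> F) + card F'"
    proof -
      have "finite F'" using that(1) matroid_finite_ground[OF M] finite_subset by blast
      have "(G \<union> F) \<union> (G \<union> F') = G \<union> F \<union> F'" "(G \<union> F) \<inter> (G \<union> F') = G" using that(1) by auto
      then show ?thesis
        using rank_submodular[OF M, of "G \<union> F" "G \<union> F'"] that(2)
          rank_function_Un_le_card[OF rank_function_rank[OF M] \<open>finite F'\<close>, of G] by simp
    qed
    then show ?thesis using mono unfolding contract_indep_def by (auto simp: Un_assoc)
  qed
  then show ?thesis
    unfolding contract_def ground_def indep_def fst_conv snd_conv rank_contract_indep[OF M, unfolded ground_def indep_def]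
    by (auto simp: fun_eq_iff Diff_Un)
qed

lemma contr_seq_eq_contract_indep:
  assumes M: "matroid M"
  shows "contr_seq M F i = (ground M - (\<Union>j<i. F j), contract_indep M (\<Union>j<i. F j))"
proof (induction i)
  case 0
  have "contract_indep M {} = indep M"
    by (simp add: fun_eq_iff contract_indep_def indep_iff_rank[OF M] rank_empty[OF M])
  then show ?case by (simp add: ground_def indep_def)
next
  case (Suc i)
  then show ?case by (simp add: lessThan_Suc Un_commute contract_contract_indep[OF M])
qed

lemma circuit_contr_seq_iff:
  assumes M: "matroid M"
  shows "circuit (contr_seq M F i) Z
    \<longleftrightarrow> rank_circuit (contract_rank (rank M) (\<Union>j<i. F j)) (ground M - (\<Union>j<i. F j)) Z"
proof -
  let ?G = "\<Union>j<i. F j"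
  have indep: "contract_indep M ?G Y \<longleftrightarrow> rank_indep (contract_rank (rank M) ?G) Y" if "Y \<subseteq> ground M - ?G" for Y
    using that unfolding contract_indep_def rank_indep_contract_rank_iff by blast
  have "finite Z" if "Z \<subseteq> ground M" using that matroid_finite_ground[OF M] finite_subset by blast
  moreover have "circuit (contr_seq M F i) Z \<longleftrightarrow>
      Z \<subseteq> ground M - ?G \<and> \<not> contract_indep M ?G Z \<and> (\<forall>D. D \<subset> Z \<longrightarrow> contract_indep M ?G D)"
    unfolding contr_seq_eq_contract_indep[OF M] circuit_def by (simp add: ground_def indep_def)
  ultimately show ?thesis unfolding rank_circuit_def using indep by (meson Diff_subset psubset_imp_subset subset_trans)
qed

theorem lemma3p12:
  fixes M :: "'a matroid" and k :: nat
    and e e' :: "nat \<Rightarrow> 'a" and C :: "nat \<Rightarrow> 'a set"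
  assumes "matroid M"
    and "inj_on e {1..k}"
    and "\<forall>i\<le>k. card (C i) \<ge> 3"
    and "\<forall>i\<in>{1..k}. C (i - 1) \<inter> C i = {e i}"
    and "\<forall>i\<le>k. \<forall>j\<le>k. i + 2 \<le> j \<longrightarrow> C i \<inter> C j = {}"
    and "e 0 \<in> C 0" and "k \<ge> 1 \<longrightarrow> e 0 \<noteq> e 1"
    and "\<forall>i\<in>{1..k}. e' i \<in> C (i - 1) - {e (i - 1), e i}"
    and "\<forall>i\<le>k. circuit (contr_seq M (\<lambda>j. C j - {e (Suc j), e' (Suc j)}) i) (C i)"
  shows "\<exists>D. circuit M D \<and> card D \<ge> k + 3 \<and> e 0 \<in> D"
proof -
  have "circuit_chain k e e' C" using assms(3-8) unfolding circuit_chain_def by blast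
  moreover have "\<forall>i\<le>k. rank_circuit (contract_rank (rank M) (\<Union>j<i. C j - {e (Suc j), e' (Suc j)}))
                   (ground M - (\<Union>j<i. C j - {e (Suc j), e' (Suc j)})) (C i)"
    using assms(9) circuit_contr_seq_iff[OF assms(1)] by blast
  ultimately obtain D where "rank_circuit (rank M) (ground M) D" "card D \<ge> k + 3" "e 0 \<in> D"
    using circuit_chain_long_circuit[OF rank_function_rank[OF assms(1)]] by blast
  moreover have "circuit M D \<longleftrightarrow> rank_circuit (rank M) (ground M) D"
    using circuit_contr_seq_iff[OF assms(1), of _ 0] by simp
  ultimately show ?thesis by blast
qed

end
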